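(* Let $|q|<1$ and let $(\alpha_n,\beta_n)$ be a Bailey pair with respect to $a$. Assume $|qa|<|z|$, no denominator vanishes, and all series converge absolutely. Then $$\sum_{n=1}^{\infty} (z;q)_{n}(q;q)_{n-1}\left( \frac{q a}{ z }\right )^{n} \beta_n - \sum_{n=1}^{\infty}\frac{(z;q)_{n}(q;q)_{n-1}}{(q a ,q a/z;q)_n}\left (\frac{q a}{z}\right)^{n}\alpha_n=f_1(a,z,q),$$ where $f_1(a,z,q)$ is given by each of the following (equal) expressions: $$f_1(a,z,q)=-\sum_{n=1}^{\infty} \frac{(q\sqrt{a},-q\sqrt{a},a,z;q)_{n}\,q^{n(n+1)/2}}{(\sqrt{a},-\sqrt{a},q a,qa/z;q)_{n}(1-q^n)}\left( \frac{- a}{ z }\right )^{n} =\sum_{n=1}^{\infty} \frac{(z;q)_{n}}{(q a;q)_{n}(1-q^n)}\left( \frac{q a}{ z }\right )^{n} =\sum_{n=1}^{\infty}\frac{a q^n/z}{1-a q^n/z}-\sum_{n=1}^{\infty}\frac{a q^n}{1-aq^n}.$$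
   Context: Notation: $(x;q)_n=(1-x)(1-xq)\cdots(1-xq^{n-1})$, $(x;q)_0=1$, $(x_1,\dots,x_m;q)_n=(x_1;q)_n\cdots(x_m;q)_n$. A Bailey pair with respect to $a$ (base $q$) is a pair of sequences $(\alpha_n,\beta_n)_{n\ge0}$ with $\alpha_0=\beta_0=1$ and, for $n>0$, $\beta_n=\sum_{j=0}^{n}\frac{\alpha_j}{(q;q)_{n-j}(aq;q)_{n+j}}$. *)

theory Defs
  imports "HOL-Analysis.Analysis"
begin

definition qpoch :: "complex \<Rightarrow> complex \<Rightarrow> nat \<Rightarrow> complex" where
  "qpoch x q n = (\<Prod>k<n. 1 - x * q ^ k)"

definition bailey_pair ::
  "complex \<Rightarrow> complex \<Rightarrow> (nat \<Rightarrow> complex) \<Rightarrow> (nat \<Rightarrow> complex) \<Rightarrow> bool" where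
  "bailey_pair a q \<alpha> \<beta> \<longleftrightarrow> \<alpha> 0 = 1 \<and> \<beta> 0 = 1 \<and>
     (\<forall>n>0. \<beta> n = (\<Sum>j\<le>n. \<alpha> j / (qpoch q q (n - j) * qpoch (a * q) q (n + j))))"

end

theory Submission
  imports Defs "HOL-Complex_Analysis.Complex_Analysis"
begin

text \<open>Inserting the Bailey-pair relation for \<open>\<beta>\<^sub>n\<close> into the \<open>\<beta>\<close>-series and exchanging the order
  of summation (legitimate by absolute convergence) reduces the first identity to the summation
  \<open>\<Sum>\<^sub>n bailey_kernel a q z j n = bailey_coeff a q z j\<close> for \<open>j \<ge> 1\<close>, which follows by induction on
  \<open>j\<close> from a WZ-style telescoping; the row \<open>j = 0\<close> produces the \<open>(z;q)\<close>-series
  \<open>\<Sum> (z;q)\<^sub>n/((qa;q)\<^sub>n(1 - q\<^sup>n)) (qa/z)\<^sup>n\<close>. For the unit Bailey pair the \<open>\<beta>\<close>-series vanishes,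
  which identifies the \<open>(z;q)\<close>-series with the very-well-poised series. Finally, as functions of
  \<open>u = a/z\<close>, the \<open>(z;q)\<close>-series and the difference of Lambert series are holomorphic in
  \<open>\<bar>u\<bar> < 1/\<bar>q\<bar>\<close> and agree at the points \<open>u = a q\<^sup>m\<close>, where the former terminates; by the
  identity theorem they agree everywhere.\<close>

section \<open>q-Pochhammer symbols\<close>

lemma qpoch_0 [simp]: "qpoch x q 0 = 1"
  by (simp add: qpoch_def)

lemma qpoch_Suc: "qpoch x q (Suc n) = qpoch x q n * (1 - x * q ^ n)"
  by (simp add: qpoch_def)

lemma qpoch_Suc_left: "qpoch x q (Suc n) = (1 - x) * qpoch (x * q) q n"
  by (induction n) (simp_all add: qpoch_Suc mult_ac)

lemma qpoch_add: "qpoch x q (m + n) = qpoch x q m * qpoch (x * q ^ m) q n"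
  by (induction n) (simp_all add: qpoch_Suc power_add mult_ac)

lemma one_minus_power_neq_0:
  fixes q :: "'a :: real_normed_div_algebra"
  assumes "norm q < 1" "n \<noteq> 0"
  shows "1 - q ^ n \<noteq> 0"
proof -
  have "norm (q ^ n) < 1"
    using assms by (simp add: norm_power power_less_one_iff)
  then show ?thesis
    by auto
qed

lemma qpoch_q_neq_0:
  assumes "norm q < 1"
  shows "qpoch q q n \<noteq> 0"
proof -
  have "1 - q * q ^ k \<noteq> 0" for k
    using one_minus_power_neq_0[OF assms, of "Suc k"] by simp
  then show ?thesis by (simp add: qpoch_def)
qed

lemma norm_one_minus_power_ge:
  fixes q :: "'a :: real_normed_div_algebra"
  assumes "norm q < 1"
  shows "1 - norm q \<le> norm (1 - q ^ Suc n)"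
proof -
  have "norm q ^ Suc n \<le> norm q"
    using assms by (simp add: power_le_one mult_left_le)
  moreover have "1 - norm q ^ Suc n \<le> norm (1 - q ^ Suc n)"
    using norm_triangle_ineq2[of 1 "q ^ Suc n"] by (simp add: norm_mult norm_power)
  ultimately show ?thesis by linarith
qed

lemma sum_power_le_inverse:
  fixes r :: real
  assumes "0 \<le> r" "r < 1"
  shows "(\<Sum>k<m. r ^ k) \<le> 1 / (1 - r)"
proof -
  have "(\<Sum>k<m. r ^ k) = (1 - r ^ m) / (1 - r)"
    using assms by (simp add: sum_gp_strict)
  also have "\<dots> \<le> 1 / (1 - r)"
    using assms by (intro divide_right_mono) auto
  finally show ?thesis .
qed

lemma prod_one_plus_geometric_le_exp:
  fixes t r :: real
  assumes "0 \<le> t" "0 \<le> r" "r < 1"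
  shows "(\<Prod>k<n. 1 + t * r ^ k) \<le> exp (t / (1 - r))"
proof -
  have "(\<Prod>k<n. 1 + t * r ^ k) \<le> (\<Prod>k<n. exp (t * r ^ k))"
    by (intro prod_mono) (use assms in \<open>auto simp: add.commute exp_ge_add_one_self\<close>)
  also have "\<dots> = exp (t * (\<Sum>k<n. r ^ k))"
    by (simp add: exp_sum sum_distrib_left)
  also have "\<dots> \<le> exp (t / (1 - r))"
    using mult_left_mono[OF sum_power_le_inverse[OF assms(2,3)] assms(1)] by simp
  finally show ?thesis .
qed

lemma norm_qpoch_le:
  assumes "norm q < 1" "norm x \<le> t"
  shows "norm (qpoch x q n) \<le> exp (t / (1 - norm q))"
proof -
  have "norm (qpoch x q n) = (\<Prod>k<n. norm (1 - x * q ^ k))"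
    by (simp add: qpoch_def prod_norm)
  also have "\<dots> \<le> (\<Prod>k<n. 1 + t * norm q ^ k)"
  proof (intro prod_mono conjI)
    fix k
    have "norm (1 - x * q ^ k) \<le> 1 + norm x * norm q ^ k"
      by (metis norm_mult norm_one norm_power norm_triangle_ineq4)
    also have "\<dots> \<le> 1 + t * norm q ^ k"
      using assms(2) by (simp add: mult_right_mono)
    finally show "norm (1 - x * q ^ k) \<le> 1 + t * norm q ^ k" .
  qed auto
  also have "\<dots> \<le> exp (t / (1 - norm q))"
    using assms order_trans[OF norm_ge_zero assms(2)] by (intro prod_one_plus_geometric_le_exp) auto
  finally show ?thesis .
qed

lemma exp_neg_two_le_one_minus:
  fixes t :: real
  assumes "0 \<le> t" "t \<le> 1/2"
  shows "exp (-2 * t) \<le> 1 - t"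
proof -
  have "-2 * t \<le> -t - 2 * t^2"
    using assms mult_right_mono[of "2*t" 1 t] by (simp add: power2_eq_square)
  also have "\<dots> \<le> ln (1 - t)"
    using ln_one_minus_pos_lower_bound assms by auto
  finally have "exp (-2 * t) \<le> exp (ln (1 - t))"
    by simp
  then show ?thesis
    using assms by simp
qed

lemma norm_qpoch_ge:
  assumes q: "norm q < 1" and small: "norm x \<le> 1/2"
  shows "exp (-2 * norm x / (1 - norm q)) \<le> norm (qpoch x q n)"
proof -
  have "exp (-2 * norm x / (1 - norm q)) \<le> exp (-2 * (norm x * (\<Sum>k<n. norm q ^ k)))"
    using mult_left_mono[OF sum_power_le_inverse[of "norm q" n] norm_ge_zero[of x]] q by simp
  also have "\<dots> = (\<Prod>k<n. exp (-2 * (norm x * norm q ^ k)))"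
    by (simp add: exp_sum[symmetric] sum_distrib_left)
  also have "\<dots> \<le> (\<Prod>k<n. norm (1 - x * q ^ k))"
  proof (intro prod_mono conjI)
    fix k
    have "norm x * norm q ^ k \<le> 1/2"
      using mult_left_mono[OF power_le_one[of "norm q" k], of "norm x"] small q by simp
    hence "exp (-2 * (norm x * norm q ^ k)) \<le> 1 - norm x * norm q ^ k"
      by (intro exp_neg_two_le_one_minus) auto
    also have "\<dots> \<le> norm (1 - x * q ^ k)"
      by (metis norm_mult norm_one norm_power norm_triangle_ineq2)
    finally show "exp (-2 * (norm x * norm q ^ k)) \<le> norm (1 - x * q ^ k)" .
  qed auto
  also have "\<dots> = norm (qpoch x q n)"
    by (simp add: qpoch_def prod_norm)
  finally show ?thesis .
qed

text \<open>A nonvanishing \<open>(x;q)\<^sub>n\<close> stays away from 0: its tail \<open>(x q\<^sup>K;q)\<^sub>m\<close> is uniformly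
  close to 1 once \<open>\<bar>x q\<^sup>K\<bar> \<le> 1/2\<close>.\<close>

lemma qpoch_bounded_below:
  assumes q: "norm q < 1" and nz: "\<And>n. qpoch x q n \<noteq> 0"
  obtains \<delta> where "\<delta> > 0" "\<And>n. \<delta> \<le> norm (qpoch x q n)"
proof -
  have "(\<lambda>K. norm x * norm q ^ K) \<longlonglongrightarrow> norm x * 0"
    by (intro tendsto_mult tendsto_const LIMSEQ_power_zero) (use q in auto)
  then have "eventually (\<lambda>K. norm x * norm q ^ K < 1/2) sequentially"
    by (intro order_tendstoD) auto
  then obtain K where K: "norm (x * q ^ K) \<le> 1/2"
    by (auto simp: eventually_sequentially norm_mult norm_power intro: less_imp_le)
  define m where "m = Min ((\<lambda>n. norm (qpoch x q n)) ` {..K})"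
  define c where "c = exp (-2 * norm (x * q ^ K) / (1 - norm q))"
  have m_pos: "m > 0" unfolding m_def using nz by (subst Min_gr_iff) auto
  have m_le: "m \<le> norm (qpoch x q n)" if "n \<le> K" for n
    unfolding m_def using that by (intro Min_le) auto
  have c_pos: "c > 0" and c_le: "c \<le> 1"
    unfolding c_def using q by (auto simp: divide_nonneg_pos)
  have "m * c \<le> norm (qpoch x q n)" for n
  proof (cases "n \<le> K")
    case True
    then show ?thesis using m_le[OF True] c_le m_pos by (smt (verit) mult_left_le)
  next
    case False
    then obtain l where n: "n = K + l" by (metis le_add_diff_inverse nat_le_linear)
    have "m * c \<le> norm (qpoch x q K) * norm (qpoch (x * q ^ K) q l)"
      unfolding c_def by (intro mult_mono m_le norm_qpoch_ge q K) (use m_pos in auto)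
    also have "\<dots> = norm (qpoch x q n)" by (simp add: n qpoch_add norm_mult)
    finally show ?thesis .
  qed
  then show ?thesis using that[of "m * c"] m_pos c_pos by simp
qed


section \<open>Double series and series of holomorphic functions\<close>

lemma abs_summable_on_triangular:
  fixes f :: "nat \<times> nat \<Rightarrow> 'a :: real_normed_vector"
  assumes A: "summable A" "\<And>j. 0 \<le> A j" and r: "0 \<le> r" "r < 1"
    and below: "\<And>j n. j \<le> n \<Longrightarrow> norm (f (j, n)) \<le> A j * r ^ (n - j)"
    and above: "\<And>j n. n < j \<Longrightarrow> f (j, n) = 0"
  shows "(\<lambda>p. norm (f p)) summable_on UNIV"
proof -
  define B where "B p = (if fst p \<le> snd p then A (fst p) * r ^ (snd p - fst p) else 0)" for p
  have B_nonneg: "B p \<ge> 0" for p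
    using A r by (simp add: B_def)
  have row: "((\<lambda>n. B (j, n)) has_sum A j / (1 - r)) UNIV" for j
  proof (rule sums_nonneg_imp_has_sum[OF _ B_nonneg])
    have "(\<lambda>i. A j * r ^ i) sums (A j * (1 / (1 - r)))"
      by (intro sums_mult geometric_sums) (use r in auto)
    then have "(\<lambda>i. B (j, i + j)) sums (A j / (1 - r))"
      by (simp add: B_def)
    moreover have "(\<Sum>i<j. B (j, i)) = 0"
      by (intro sum.neutral) (auto simp: B_def)
    ultimately show "(\<lambda>n. B (j, n)) sums (A j / (1 - r))"
      using sums_iff_shift[of "\<lambda>n. B (j, n)" j] by simp
  qed
  have "(\<lambda>j. A j / (1 - r)) summable_on UNIV"
    using A r by (intro norm_summable_imp_summable_on summable_divide) auto
  then have "B summable_on UNIV \<times> UNIV"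
    by (intro summable_on_SigmaI[OF row] B_nonneg)
  then have "B summable_on UNIV"
    by simp
  then show ?thesis
    using B_nonneg above below
    by (intro Infinite_Sum.abs_summable_on_comparison_test'[where g = B]) (auto simp: B_def not_le)
qed

lemma sums_rows_and_columns:
  fixes f :: "nat \<times> nat \<Rightarrow> 'a :: banach"
  assumes abs: "(\<lambda>p. norm (f p)) summable_on UNIV"
    and rows: "\<And>j. (\<lambda>n. f (j, n)) sums R j"
    and cols: "\<And>n. (\<lambda>j. f (j, n)) sums C n"
  shows "R sums (\<Sum>\<^sub>\<infinity>p. f p)" and "C sums (\<Sum>\<^sub>\<infinity>p. f p)"
proof -
  have f_has_sum: "(f has_sum (\<Sum>\<^sub>\<infinity>p. f p)) (UNIV \<times> UNIV)"
    using abs_summable_summable[OF abs] by (simp add: has_sum_infsum)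
  have norm_summable: "summable (\<lambda>n. norm (f (g n)))" if g: "inj g" for g :: "nat \<Rightarrow> nat \<times> nat"
  proof -
    have "(\<lambda>p. norm (f p)) summable_on range g"
      using abs by (rule summable_on_subset_banach) simp
    then have "(\<lambda>n. norm (f (g n))) summable_on UNIV"
      using summable_on_reindex[of g UNIV "\<lambda>p. norm (f p)"] g by (simp add: o_def)
    then show ?thesis
      by (simp add: summable_on_UNIV_nonneg_real_iff)
  qed
  have row: "((\<lambda>n. f (j, n)) has_sum R j) UNIV" for j
    by (rule norm_summable_imp_has_sum[OF norm_summable rows]) (simp add: inj_def)
  have col: "((\<lambda>j. f (j, n)) has_sum C n) UNIV" for n
    by (rule norm_summable_imp_has_sum[OF norm_summable cols]) (simp add: inj_def)
  have "(R has_sum (\<Sum>\<^sub>\<infinity>p. f p)) UNIV"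
    by (rule has_sum_Sigma[OF isUCont_plus f_has_sum row])
  then show "R sums (\<Sum>\<^sub>\<infinity>p. f p)"
    by (rule has_sum_imp_sums)
  have "((\<lambda>(n, j). f (j, n)) has_sum (\<Sum>\<^sub>\<infinity>p. f p)) (UNIV \<times> UNIV)"
    using has_sum_swap[THEN iffD1, OF f_has_sum] .
  then have "(C has_sum (\<Sum>\<^sub>\<infinity>p. f p)) UNIV"
    by (rule has_sum_Sigma[OF isUCont_plus]) (simp add: col)
  then show "C sums (\<Sum>\<^sub>\<infinity>p. f p)"
    by (rule has_sum_imp_sums)
qed

lemma holomorphic_on_suminf_ball:
  fixes f :: "nat \<Rightarrow> complex \<Rightarrow> complex"
  assumes hol: "\<And>n. f n holomorphic_on ball 0 R"
    and bound: "\<And>\<rho>. 0 < \<rho> \<Longrightarrow> \<rho> < R \<Longrightarrow>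
                  \<exists>M. summable M \<and> (\<forall>n u. norm u \<le> \<rho> \<longrightarrow> norm (f n u) \<le> M n)"
  shows "(\<lambda>u. \<Sum>n. f n u) holomorphic_on ball 0 R"
proof (rule holomorphic_uniform_sequence[where f = "\<lambda>N u. \<Sum>n<N. f n u"])
  show "(\<lambda>u. \<Sum>n<N. f n u) holomorphic_on ball 0 R" for N
    by (intro holomorphic_intros hol)
  fix x :: complex
  assume "x \<in> ball 0 R"
  then have x: "norm x < R" by simp
  define d where "d = (R - norm x) / 2"
  define \<rho> where "\<rho> = (R + norm x) / 2"
  have d: "d > 0"
    using x by (simp add: d_def)
  have \<rho>_pos: "0 < \<rho>"
    unfolding \<rho>_def using x by (metis add_pos_nonneg half_gt_zero norm_ge_zero order_le_less_trans)
  have \<rho>_lt: "\<rho> < R"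
    using x by (simp add: \<rho>_def)
  have norm_le: "norm u \<le> \<rho>" if "u \<in> cball x d" for u
    using that norm_triangle_ineq2[of u x] by (simp add: dist_norm norm_minus_commute d_def \<rho>_def)
  obtain M where M: "summable M" "\<And>n u. norm u \<le> \<rho> \<Longrightarrow> norm (f n u) \<le> M n"
    using bound[OF \<rho>_pos \<rho>_lt] by blast
  have "uniform_limit (cball x d) (\<lambda>N u. \<Sum>n<N. f n u) (\<lambda>u. \<Sum>n. f n u) sequentially"
    by (rule Weierstrass_m_test[OF M(2)[OF norm_le] M(1)])
  moreover have "cball x d \<subseteq> ball 0 R"
    using norm_le \<rho>_lt by fastforce
  ultimately show "\<exists>d>0. cball x d \<subseteq> ball 0 R \<and>
      uniform_limit (cball x d) (\<lambda>N u. \<Sum>n<N. f n u) (\<lambda>u. \<Sum>n. f n u) sequentially"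
    using d by blast
qed simp


section \<open>Summing the kernel of the Bailey transform\<close>

text \<open>Inserting the definition of \<open>\<beta>\<^sub>n\<close> into the \<open>\<beta>\<close>-series, the coefficient of \<open>\<alpha>\<^sub>j\<close> in its
  \<open>n\<close>-th term is \<open>bailey_kernel a q z j n\<close>; its sum over \<open>n\<close> is the coefficient
  \<open>bailey_coeff a q z j\<close> of \<open>\<alpha>\<^sub>j\<close> in the \<open>\<alpha>\<close>-series (for \<open>j \<ge> 1\<close>).\<close>

definition bailey_kernel :: "complex \<Rightarrow> complex \<Rightarrow> complex \<Rightarrow> nat \<Rightarrow> nat \<Rightarrow> complex" where
  "bailey_kernel a q z j n =
     (if j \<le> n \<and> 1 \<le> n then qpoch z q n * qpoch q q (n - 1) * (q * a / z) ^ n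
        / (qpoch q q (n - j) * qpoch (q * a) q (n + j)) else 0)"

definition bailey_coeff :: "complex \<Rightarrow> complex \<Rightarrow> complex \<Rightarrow> nat \<Rightarrow> complex" where
  "bailey_coeff a q z j =
     qpoch z q j * qpoch q q (j - 1) / (qpoch (q * a) q j * qpoch (q * a / z) q j) * (q * a / z) ^ j"

locale bailey_setting =
  fixes a q z :: complex
  assumes norm_q: "norm q < 1"
    and norm_qa_less: "norm (q * a) < norm z"
    and qpoch_qa_neq_0: "\<And>n. qpoch (q * a) q n \<noteq> 0"
    and qpoch_qaz_neq_0: "\<And>n. qpoch (q * a / z) q n \<noteq> 0"
begin

abbreviation T :: "nat \<Rightarrow> nat \<Rightarrow> complex" where "T \<equiv> bailey_kernel a q z"
abbreviation c :: "nat \<Rightarrow> complex" where "c \<equiv> bailey_coeff a q z"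

lemma z_neq_0: "z \<noteq> 0"
  using norm_qa_less by auto

lemma norm_qaz_less_1: "norm (q * a / z) < 1"
  using norm_qa_less z_neq_0 by (simp add: norm_divide divide_less_eq)

lemma qpoch_qq_neq_0: "qpoch q q n \<noteq> 0"
  using qpoch_q_neq_0[OF norm_q] .

lemma one_minus_qa_neq_0: "1 - q * a * q ^ n \<noteq> 0"
  using qpoch_qa_neq_0[of "Suc n"] by (simp add: qpoch_Suc)

lemma one_minus_qaz_neq_0: "1 - q * a / z * q ^ n \<noteq> 0"
  using qpoch_qaz_neq_0[of "Suc n"] by (simp add: qpoch_Suc)

lemma bailey_kernel_eq_0: "n < j \<or> n = 0 \<Longrightarrow> T j n = 0"
  by (auto simp: bailey_kernel_def)

lemma bailey_kernel_Suc_index: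
  assumes "1 \<le> j" "j \<le> n"
  shows "T (Suc j) n * (1 - q * a * q ^ (n + j)) = T j n * (1 - q ^ (n - j))"
proof (cases "n = j")
  case False
  then obtain m where m: "n - j = Suc m" "n - Suc j = m"
    using assms by (metis Suc_diff_Suc diff_Suc_1 le_neq_implies_less)
  define N where "N = qpoch z q n * qpoch q q (n - 1) * (q * a / z) ^ n"
  have "T (Suc j) n = N / (qpoch q q m * (qpoch (q * a) q (n + j) * (1 - q * a * q ^ (n + j))))"
    using assms False by (simp add: bailey_kernel_def N_def m qpoch_Suc)
  moreover have "T j n = N / (qpoch q q m * (1 - q ^ (n - j)) * qpoch (q * a) q (n + j))"
    using assms by (simp add: bailey_kernel_def N_def m(1) qpoch_Suc)
  moreover have "1 - q ^ (n - j) \<noteq> 0"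
    using qpoch_qq_neq_0[of "Suc m"] by (simp add: m qpoch_Suc)
  ultimately show ?thesis
    using qpoch_qq_neq_0[of m] qpoch_qa_neq_0[of "n + j"] one_minus_qa_neq_0[of "n + j"] by simp
qed (simp add: bailey_kernel_def)

lemma bailey_kernel_Suc:
  assumes "1 \<le> j" "j \<le> n"
  shows "T j (Suc n) * (1 - q * q ^ (n - j)) * (1 - q * a * q ^ (n + j))
       = T j n * (1 - z * q ^ n) * (1 - q ^ n) * (q * a / z)"
proof -
  obtain p where p: "n = Suc p"
    using assms by (cases n) auto
  have field: "(Z * u) * (P * v) * (X * w) / (E * f * (G * h)) * f * h = Z * P * X / (E * G) * u * v * w"
    if "E \<noteq> 0" "f \<noteq> 0" "G \<noteq> 0" "h \<noteq> 0" for Z u P v X w E f G h :: complex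
    using that by (simp add: field_simps)
  have Suc_n: "T j (Suc n) = (qpoch z q n * (1 - z * q ^ n)) * (qpoch q q p * (1 - q ^ n))
      * ((q * a / z) ^ n * (q * a / z))
      / (qpoch q q (n - j) * (1 - q * q ^ (n - j)) * (qpoch (q * a) q (n + j) * (1 - q * a * q ^ (n + j))))"
  proof -
    have "Suc n - j = Suc (n - j)" "Suc n + j = Suc (n + j)" "q * q ^ p = q ^ n"
      using assms p by auto
    then show ?thesis
      using assms by (simp only: bailey_kernel_def if_True p qpoch_Suc power_Suc2 diff_Suc_1) simp
  qed
  have n: "T j n = qpoch z q n * qpoch q q p * (q * a / z) ^ n
      / (qpoch q q (n - j) * qpoch (q * a) q (n + j))"
    using assms by (simp add: bailey_kernel_def p)
  have "1 - q * q ^ (n - j) \<noteq> 0"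
    using qpoch_qq_neq_0[of "Suc (n - j)"] by (simp add: qpoch_Suc)
  then show ?thesis
    unfolding Suc_n n by (intro field qpoch_qq_neq_0 qpoch_qa_neq_0 one_minus_qa_neq_0)
qed

lemma bailey_coeff_Suc:
  assumes "1 \<le> j"
  shows "c (Suc j) * (1 - q * a * q ^ j) * (1 - q * a / z * q ^ j)
       = c j * (1 - z * q ^ j) * (1 - q ^ j) * (q * a / z)"
proof -
  obtain i where i: "j = Suc i"
    using assms by (cases j) auto
  have field: "(Z * u) * (P * v) / ((A * f) * (X * g)) * (w * w') * f * g
      = Z * P / (A * X) * w * u * v * w'"
    if "A \<noteq> 0" "f \<noteq> 0" "X \<noteq> 0" "g \<noteq> 0" for Z u P v A f X g w w' :: complex
    using that by (simp add: field_simps)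
  have Suc_j: "c (Suc j) = (qpoch z q j * (1 - z * q ^ j)) * (qpoch q q i * (1 - q ^ j))
      / ((qpoch (q * a) q j * (1 - q * a * q ^ j)) * (qpoch (q * a / z) q j * (1 - q * a / z * q ^ j)))
      * ((q * a / z) ^ j * (q * a / z))"
    by (simp only: bailey_coeff_def i qpoch_Suc power_Suc2 diff_Suc_1 power_Suc[symmetric])
  have j: "c j = qpoch z q j * qpoch q q i / (qpoch (q * a) q j * qpoch (q * a / z) q j) * (q * a / z) ^ j"
    by (simp add: bailey_coeff_def i)
  show ?thesis
    unfolding Suc_j j by (intro field qpoch_qa_neq_0 qpoch_qaz_neq_0 one_minus_qa_neq_0 one_minus_qaz_neq_0)
qed

lemma bailey_kernel_1_eq_diff:
  assumes "1 \<le> n"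
  shows "qpoch z q (Suc n) * (q * a / z) ^ Suc n / qpoch (q * a) q (Suc n)
       - qpoch z q n * (q * a / z) ^ n / qpoch (q * a) q n = (q * a / z - 1) * T 1 n"
proof -
  define x where "x = q * a / z"
  have field: "Z * (1 - z * U) * (X * x) / (A * f) - Z * X / A = (x - 1) * (Z * Q * X / (Q * (A * f)))"
    if "A \<noteq> 0" "f \<noteq> 0" "Q \<noteq> 0" "f = 1 - x * z * U" for Z U X A f Q
  proof -
    have "Z * (1 - z * U) * (X * x) / (A * f) - Z * X / A = Z * X * ((1 - z * U) * x - f) / (A * f)"
      using that(1,2) by (simp add: field_simps)
    also have "(1 - z * U) * x - f = x - 1"
      using that(4) by (simp add: algebra_simps)
    finally show ?thesis
      using that(1-3) by (simp add: field_simps)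
  qed
  have "qpoch z q (Suc n) * x ^ Suc n / qpoch (q * a) q (Suc n) - qpoch z q n * x ^ n / qpoch (q * a) q n
      = qpoch z q n * (1 - z * q ^ n) * (x ^ n * x) / (qpoch (q * a) q n * (1 - q * a * q ^ n))
        - qpoch z q n * x ^ n / qpoch (q * a) q n"
    by (simp add: qpoch_Suc)
  also have "\<dots> = (x - 1) * (qpoch z q n * qpoch q q (n - 1) * x ^ n
      / (qpoch q q (n - 1) * (qpoch (q * a) q n * (1 - q * a * q ^ n))))"
    using z_neq_0 by (intro field qpoch_qa_neq_0 one_minus_qa_neq_0 qpoch_qq_neq_0) (simp add: x_def)
  also have "\<dots> = (x - 1) * T 1 n"
    using assms by (simp add: bailey_kernel_def qpoch_Suc x_def)
  finally show ?thesis
    by (simp only: x_def)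
qed

text \<open>By the previous lemma, \<open>(x - 1) T 1 n\<close> with \<open>x = q a / z\<close> telescopes to the limit 0 of
  \<open>(z;q)\<^sub>n x\<^sup>n / (q a;q)\<^sub>n\<close>; the index is clamped at 1 because \<open>T 1 0 = 0\<close>.\<close>

lemma bailey_kernel_sums_1: "(\<lambda>n. T 1 n) sums c 1"
proof -
  define x where "x = q * a / z"
  define G where "G n = qpoch z q (max n 1) * x ^ max n 1 / qpoch (q * a) q (max n 1)" for n
  have x: "x - 1 \<noteq> 0" "norm x < 1"
    using norm_qaz_less_1 by (auto simp: x_def)
  have step: "G (Suc n) - G n = (x - 1) * T 1 n" for n
  proof (cases "n = 0")
    case False
    then have "max n 1 = n" "max (Suc n) 1 = Suc n"
      by auto
    then show ?thesis
      using bailey_kernel_1_eq_diff[of n] False unfolding G_def x_def by (simp only:)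
  qed (simp add: G_def bailey_kernel_eq_0)
  obtain \<delta> where \<delta>: "\<delta> > 0" "\<And>n. \<delta> \<le> norm (qpoch (q * a) q n)"
    using qpoch_bounded_below[OF norm_q qpoch_qa_neq_0] by blast
  define E where "E = exp (norm z / (1 - norm q))"
  have "G \<longlonglongrightarrow> 0"
  proof (rule Lim_null_comparison)
    show "\<forall>\<^sub>F n in sequentially. norm (G n) \<le> E / \<delta> * norm x ^ n"
    proof (rule eventually_sequentiallyI[of 1])
      fix n :: nat
      assume "1 \<le> n"
      then have "norm (G n) = norm (qpoch z q n) * norm x ^ n / norm (qpoch (q * a) q n)"
        by (simp add: G_def max_def norm_mult norm_divide norm_power)
      also have "\<dots> \<le> E * norm x ^ n / \<delta>"
        by (intro frac_le mult_right_mono \<delta>) (auto simp: E_def norm_qpoch_le[OF norm_q])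
      finally show "norm (G n) \<le> E / \<delta> * norm x ^ n"
        by simp
    qed
    show "(\<lambda>n. E / \<delta> * norm x ^ n) \<longlonglongrightarrow> 0"
      by (intro tendsto_mult_right_zero LIMSEQ_power_zero) (use x in simp)
  qed
  then have "(\<lambda>n. (x - 1) * T 1 n) sums (- G 0)"
    using telescope_sums[of G 0] by (simp add: step)
  then have "(\<lambda>n. (x - 1) * T 1 n / (x - 1)) sums (- G 0 / (x - 1))"
    by (rule sums_divide)
  then have "(\<lambda>n. T 1 n) sums (- G 0 / (x - 1))"
    using x by simp
  moreover have "- G 0 / (x - 1) = c 1"
  proof -
    have "c 1 = (1 - z) * x / ((1 - q * a) * (1 - x))"
      by (simp add: bailey_coeff_def qpoch_def x_def)
    moreover have "G 0 = (1 - z) * x / (1 - q * a)"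
      by (simp add: G_def qpoch_def)
    moreover have "x - 1 = - (1 - x)"
      by simp
    then have "- G 0 / (x - 1) = G 0 / (1 - x)"
      by (simp only: divide_minus_right minus_minus divide_minus_left)
    ultimately show ?thesis
      by (simp add: divide_divide_eq_left)
  qed
  ultimately show ?thesis
    by simp
qed

text \<open>A WZ-style certificate: the combination below telescopes in \<open>n\<close>.\<close>

lemma bailey_kernel_telescoping:
  assumes j: "1 \<le> j"
  defines "K \<equiv> (c (Suc j) - c j) / (q * a / z - 1)"
  shows "c (Suc j) * T j n - c j * T (Suc j) n
       = K * (1 - q ^ (Suc n - j)) * T j (Suc n) - K * (1 - q ^ (n - j)) * T j n"
proof (cases "j \<le> n")
  case False
  then have "T j n = 0" "T (Suc j) n = 0" "(1 - q ^ (Suc n - j)) * T j (Suc n) = 0"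
    by (auto simp: bailey_kernel_def)
  then show ?thesis
    by simp
next
  case True
  define x where "x = q * a / z"
  define D where "D = 1 - q * a * q ^ (n + j)"
  define U where "U = q ^ n"
  define V where "V = q ^ j"
  define W where "W = q ^ (n - j)"
  have x: "x - 1 \<noteq> 0" "q * a = x * z"
    using norm_qaz_less_1 z_neq_0 by (auto simp: x_def)
  have UVW: "U = W * V"
    using True by (simp add: U_def V_def W_def power_add[symmetric])
  have D: "D = 1 - x * z * U * V"
    by (simp add: D_def U_def V_def x(2)[symmetric] power_add mult_ac)
  have coeff: "c (Suc j) * (1 - x * V) * (1 - x * z * V) = c j * (1 - V) * x * (1 - z * V)"
    using bailey_coeff_Suc[OF j] x(2) by (simp add: x_def V_def mult_ac)
  have "(c (Suc j) - c j) * (x * (1 - z * U) * (1 - U) - (1 - W) * D)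
      - (x - 1) * (c (Suc j) * D - c j * (1 - W))
      = W * (c (Suc j) * (1 - x * V) * (1 - x * z * V) - c j * (1 - V) * x * (1 - z * V))"
    unfolding UVW D by algebra
  then have "(c (Suc j) - c j) * (x * (1 - z * U) * (1 - U) - (1 - W) * D)
      = (x - 1) * (c (Suc j) * D - c j * (1 - W))"
    by (simp add: coeff)
  then have scal: "c (Suc j) * D - c j * (1 - W) = K * (x * (1 - z * U) * (1 - U) - (1 - W) * D)"
    using x(1) by (simp add: K_def x_def[symmetric])
  have "Suc n - j = Suc (n - j)"
    using True by simp
  then have Suc_n: "(1 - q ^ (Suc n - j)) * T j (Suc n) * D = T j n * (1 - z * U) * (1 - U) * x"
    using bailey_kernel_Suc[OF j True] by (simp add: D_def U_def x_def mult_ac)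
  have "(c (Suc j) * T j n - c j * T (Suc j) n) * D = c (Suc j) * T j n * D - c j * (T (Suc j) n * D)"
    by (simp add: algebra_simps)
  also have "\<dots> = T j n * (c (Suc j) * D - c j * (1 - W))"
    unfolding D_def W_def bailey_kernel_Suc_index[OF j True] by (simp add: algebra_simps)
  also have "\<dots> = K * (T j n * (1 - z * U) * (1 - U) * x) - K * (1 - W) * T j n * D"
    unfolding scal by (simp add: algebra_simps)
  also have "\<dots> = (K * (1 - q ^ (Suc n - j)) * T j (Suc n) - K * (1 - q ^ (n - j)) * T j n) * D"
    unfolding Suc_n[symmetric] W_def by (simp add: algebra_simps)
  finally show ?thesis
    using one_minus_qa_neq_0 by (simp add: D_def)
qed

lemma bailey_coeff_eq_0_Suc:
  assumes j: "1 \<le> j" and "c j = 0"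
  shows "c (Suc j) = 0" and "T (Suc j) n = 0"
proof -
  show "c (Suc j) = 0"
    using bailey_coeff_Suc[OF j] assms one_minus_qa_neq_0[of j] one_minus_qaz_neq_0[of j] z_neq_0
    by simp
  show "T (Suc j) n = 0"
  proof (cases "Suc j \<le> n")
    case True
    then obtain m where n: "n = j + m"
      using le_Suc_ex Suc_leD by blast
    have "qpoch z q j * (q * a / z) ^ j = 0"
      using \<open>c j = 0\<close> qpoch_qq_neq_0[of "j - 1"] qpoch_qa_neq_0[of j] qpoch_qaz_neq_0[of j]
      by (simp add: bailey_coeff_def)
    then have "qpoch z q n * (q * a / z) ^ n = 0"
      by (simp add: n qpoch_add power_add) blast
    then show ?thesis
      by (simp add: bailey_kernel_def) blast
  qed (simp add: bailey_kernel_def)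
qed

lemma bailey_kernel_sums:
  assumes "1 \<le> j"
  shows "(\<lambda>n. T j n) sums c j"
  using assms
proof (induction j rule: nat_induct_at_least)
  case base
  show ?case
    by (rule bailey_kernel_sums_1)
next
  case (Suc j)
  define K where "K = (c (Suc j) - c j) / (q * a / z - 1)"
  define H where "H n = K * (1 - q ^ (n - j)) * T j n" for n
  have "H \<longlonglongrightarrow> 0"
  proof (rule Lim_null_comparison)
    have "norm (1 - q ^ (n - j)) \<le> 2" for n
      using norm_triangle_ineq4[of 1 "q ^ (n - j)"] power_le_one[of "norm q" "n - j"] norm_q
      by (simp add: norm_power)
    then show "\<forall>\<^sub>F n in sequentially. norm (H n) \<le> norm K * 2 * norm (T j n)"
      by (intro always_eventually allI)
         (auto simp: H_def norm_mult intro!: mult_right_mono mult_left_mono)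
    have "T j \<longlonglongrightarrow> 0"
      using Suc.IH by (intro summable_LIMSEQ_zero sums_summable)
    then show "(\<lambda>n. norm K * 2 * norm (T j n)) \<longlonglongrightarrow> 0"
      by (intro tendsto_mult_right_zero tendsto_norm_zero)
  qed
  then have "(\<lambda>n. c (Suc j) * T j n - c j * T (Suc j) n) sums 0"
    using telescope_sums[of H 0] bailey_kernel_telescoping[OF Suc.hyps]
    by (simp add: H_def K_def bailey_kernel_eq_0)
  from sums_diff[OF sums_mult[OF Suc.IH, of "c (Suc j)"] this]
  have scaled: "(\<lambda>n. c j * T (Suc j) n) sums (c j * c (Suc j))"
    by (simp add: mult.commute)
  show ?case
  proof (cases "c j = 0")
    case False
    then show ?thesis
      using sums_mult[OF scaled, of "1 / c j"] by simp
  next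
    case True
    then show ?thesis
      using bailey_coeff_eq_0_Suc[OF Suc.hyps] by simp
  qed
qed

lemma bailey_kernel_eq_coeff_mult:
  assumes "1 \<le> j" "j \<le> n"
  shows "T j n = c j * (qpoch (z * q ^ j) q (n - j) * qpoch (q ^ j) q (n - j) * (q * a / z) ^ (n - j)
                   * qpoch (q * a / z) q j * qpoch (q * a) q j
                   / (qpoch q q (n - j) * qpoch (q * a) q (n + j)))"
proof -
  obtain m where n: "n = j + m" "n - 1 = (j - 1) + m"
    using assms by (metis Nat.add_diff_assoc2 le_add_diff_inverse)
  have qj: "q * q ^ (j - 1) = q ^ j"
    using assms by (simp flip: power_Suc)
  have field: "(Z1 * Z2) * (P1 * P2) * (Y1 * Y2) / (Q * R) = Z1 * P1 / (A * X) * Y1 * (Z2 * P2 * Y2 * X * A / (Q * R))"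
    if "A \<noteq> 0" "X \<noteq> 0" for Z1 Z2 P1 P2 Y1 Y2 Q R A X :: complex
    using that by (simp add: field_simps)
  have "qpoch z q n = qpoch z q j * qpoch (z * q ^ j) q m" "n - j = m"
    "qpoch q q (n - 1) = qpoch q q (j - 1) * qpoch (q ^ j) q m" "(q * a / z) ^ n = (q * a / z) ^ j * (q * a / z) ^ m"
    unfolding n(2) qpoch_add qj by (simp_all add: n(1) qpoch_add power_add)
  then have "T j n = (qpoch z q j * qpoch (z * q ^ j) q m) * (qpoch q q (j - 1) * qpoch (q ^ j) q m)
        * ((q * a / z) ^ j * (q * a / z) ^ m) / (qpoch q q m * qpoch (q * a) q (n + j))"
    using assms by (simp add: bailey_kernel_def)
  also have "\<dots> = c j * (qpoch (z * q ^ j) q m * qpoch (q ^ j) q m * (q * a / z) ^ m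
                   * qpoch (q * a / z) q j * qpoch (q * a) q j / (qpoch q q m * qpoch (q * a) q (n + j)))"
    unfolding bailey_coeff_def by (intro field qpoch_qa_neq_0 qpoch_qaz_neq_0)
  finally show ?thesis
    by (simp add: n(1))
qed

lemma norm_bailey_kernel_le:
  obtains C where "C > 0"
    and "\<And>j n. norm (T j n) \<le> C * (if j = 0 then 1 else norm (c j)) * norm (q * a / z) ^ (n - j)"
proof -
  define r where "r = norm (q * a / z)"
  define E where "E t = exp (t / (1 - norm q))" for t
  have qpoch_le: "norm (qpoch y q m) \<le> E t" if "norm y \<le> t" for y m t
    unfolding E_def using norm_qpoch_le[OF norm_q that] .
  have E_pos: "0 < E t" for t
    by (simp add: E_def)
  have E_ge_1: "1 \<le> E t" if "0 \<le> t" for t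
    using that norm_q by (simp add: E_def)
  obtain dq where dq: "dq > 0" "\<And>n. dq \<le> norm (qpoch q q n)"
    using qpoch_bounded_below[OF norm_q qpoch_qq_neq_0] by blast
  obtain da where da: "da > 0" "\<And>n. da \<le> norm (qpoch (q * a) q n)"
    using qpoch_bounded_below[OF norm_q qpoch_qa_neq_0] by blast
  have norm_q_le: "norm (q ^ k) \<le> 1" "norm (q * q ^ k) \<le> 1" for k
    using norm_q by (simp_all add: norm_mult norm_power power_le_one mult_le_one)
  define C where "C = E (norm z) * E 1 * E 1 * E (norm (q * a)) / (dq * da)"
  have C_pos: "C > 0"
    using dq da by (simp add: C_def E_def)
  have kernel_0: "norm (T 0 n) \<le> C * r ^ n" if "1 \<le> n" for n
  proof -
    have "norm (T 0 n) = norm (qpoch z q n) * norm (qpoch q q (n - 1)) * r ^ n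
          / (norm (qpoch q q n) * norm (qpoch (q * a) q n))"
      using that by (simp add: bailey_kernel_def norm_mult norm_divide norm_power r_def)
    also have "\<dots> \<le> E (norm z) * E 1 * r ^ n / (dq * da)"
      using dq da norm_q E_pos less_imp_le[OF E_pos] by (intro frac_le mult_mono mult_pos_pos qpoch_le) (auto simp: r_def)
    also have "\<dots> \<le> E (norm z) * E 1 * r ^ n * (E 1 * E (norm (q * a))) / (dq * da)"
    proof -
      have "1 \<le> E 1 * E (norm (q * a))"
        using mult_mono[OF E_ge_1 E_ge_1, of 1 "norm (q * a)"] less_imp_le[OF E_pos] by simp
      moreover have "0 \<le> E (norm z) * E 1 * r ^ n"
        using E_pos by (simp add: r_def less_imp_le)
      ultimately show ?thesis
        using dq da by (intro divide_right_mono) (auto dest: mult_left_mono)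
    qed
    also have "\<dots> = C * r ^ n"
      by (simp add: C_def)
    finally show ?thesis .
  qed
  have kernel_j: "norm (T j n) \<le> norm (c j) * (C * r ^ (n - j))" if "1 \<le> j" "j \<le> n" for j n
  proof -
    have "norm (T j n) = norm (c j) * (norm (qpoch (z * q ^ j) q (n - j)) * norm (qpoch (q ^ j) q (n - j))
        * r ^ (n - j) * norm (qpoch (q * a / z) q j) * norm (qpoch (q * a) q j)
        / (norm (qpoch q q (n - j)) * norm (qpoch (q * a) q (n + j))))"
      by (simp add: bailey_kernel_eq_coeff_mult[OF that] norm_mult norm_divide norm_power r_def)
    also have "\<dots> \<le> norm (c j) * (E (norm z) * E 1 * r ^ (n - j) * E 1 * E (norm (q * a)) / (dq * da))"
      using dq da norm_q norm_qaz_less_1 norm_q_le(1)[of j] E_pos less_imp_le[OF E_pos]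
      by (intro mult_left_mono frac_le mult_mono mult_pos_pos qpoch_le)
         (auto simp: r_def norm_mult mult_left_le)
    also have "\<dots> = norm (c j) * (C * r ^ (n - j))"
      by (simp add: C_def)
    finally show ?thesis .
  qed
  have "norm (T j n) \<le> C * (if j = 0 then 1 else norm (c j)) * r ^ (n - j)" for j n
    using kernel_0[of n] kernel_j[of j n] C_pos
    by (cases "j \<le> n \<and> 1 \<le> n") (auto simp: bailey_kernel_eq_0 mult_ac r_def)
  then show ?thesis
    using that C_pos by (simp add: r_def)
qed

lemma abs_summable_bailey_kernel:
  assumes \<alpha>0: "\<alpha> 0 = 1" and abs_alpha: "summable (\<lambda>j. norm (c (Suc j) * \<alpha> (Suc j)))"
  shows "(\<lambda>p. norm (T (fst p) (snd p) * \<alpha> (fst p))) summable_on UNIV"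
proof -
  obtain C where C: "C > 0"
    "\<And>j n. norm (T j n) \<le> C * (if j = 0 then 1 else norm (c j)) * norm (q * a / z) ^ (n - j)"
    using norm_bailey_kernel_le by blast
  define A where "A j = C * (if j = 0 then 1 else norm (c j * \<alpha> j))" for j
  show ?thesis
  proof (rule abs_summable_on_triangular[where A = A])
    have "summable (\<lambda>j. A (Suc j))"
      using abs_alpha by (simp add: A_def summable_mult)
    then show "summable A"
      by (simp add: summable_Suc_iff)
    show "norm (T (fst (j, n)) (snd (j, n)) * \<alpha> (fst (j, n))) \<le> A j * norm (q * a / z) ^ (n - j)" for j n
      using mult_right_mono[OF C(2)[of j n] norm_ge_zero[of "\<alpha> j"]] \<alpha>0
      by (auto simp: A_def norm_mult mult_ac)
  qed (use C(1) norm_qaz_less_1 in \<open>auto simp: A_def bailey_kernel_eq_0\<close>)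
qed

lemma bailey_kernel_sums_0:
  assumes "summable (\<lambda>n. norm (qpoch z q (Suc n) / (qpoch (q * a) q (Suc n) * (1 - q ^ Suc n))
             * (q * a / z) ^ Suc n))"
  shows "(\<lambda>n. T 0 n) sums (\<Sum>n. qpoch z q (Suc n) / (qpoch (q * a) q (Suc n) * (1 - q ^ Suc n))
             * (q * a / z) ^ Suc n)"
    (is "_ sums suminf ?rhs")
proof -
  have "?rhs n = T 0 (Suc n)" for n
    using qpoch_qq_neq_0[of n] by (simp add: bailey_kernel_def qpoch_Suc mult_ac)
  moreover have "?rhs sums suminf ?rhs"
    by (rule summable_sums[OF summable_norm_cancel[OF assms]])
  ultimately have "(\<lambda>n. T 0 (Suc n)) sums suminf ?rhs"
    by (simp only:)
  then show ?thesis
    by (simp add: sums_Suc_iff bailey_kernel_eq_0)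
qed

lemma bailey_kernel_column_sums:
  assumes "bailey_pair a q \<alpha> \<beta>"
  shows "(\<lambda>j. T j n * \<alpha> j) sums (if n = 0 then 0 else qpoch z q n * qpoch q q (n - 1) * (q * a / z) ^ n * \<beta> n)"
proof -
  have "(\<lambda>j. T j n * \<alpha> j) sums (\<Sum>j\<le>n. T j n * \<alpha> j)"
    by (rule sums_finite) (auto simp: bailey_kernel_eq_0)
  moreover have "(\<Sum>j\<le>n. T j n * \<alpha> j) = qpoch z q n * qpoch q q (n - 1) * (q * a / z) ^ n * \<beta> n" if "n \<noteq> 0"
  proof -
    have "(\<Sum>j\<le>n. T j n * \<alpha> j) = (\<Sum>j\<le>n. qpoch z q n * qpoch q q (n - 1) * (q * a / z) ^ n
                                   * (\<alpha> j / (qpoch q q (n - j) * qpoch (a * q) q (n + j))))"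
      using that by (intro sum.cong) (auto simp: bailey_kernel_def mult.commute[of a q])
    moreover have "\<beta> n = (\<Sum>j\<le>n. \<alpha> j / (qpoch q q (n - j) * qpoch (a * q) q (n + j)))"
      using assms that by (simp add: bailey_pair_def)
    ultimately show ?thesis
      by (simp only: sum_distrib_left)
  qed
  ultimately show ?thesis
    by (auto simp: bailey_kernel_eq_0)
qed

lemma bailey_transform:
  assumes bp: "bailey_pair a q \<alpha> \<beta>"
    and abs_alpha: "summable (\<lambda>n. norm (qpoch z q (Suc n) * qpoch q q n
                 / (qpoch (q * a) q (Suc n) * qpoch (q * a / z) q (Suc n))
                 * (q * a / z) ^ Suc n * \<alpha> (Suc n)))"
    and abs_rhs: "summable (\<lambda>n. norm (qpoch z q (Suc n) / (qpoch (q * a) q (Suc n) * (1 - q ^ Suc n))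
                 * (q * a / z) ^ Suc n))"
  shows "(\<Sum>n. qpoch z q (Suc n) * qpoch q q n * (q * a / z) ^ Suc n * \<beta> (Suc n))
       - (\<Sum>n. qpoch z q (Suc n) * qpoch q q n
                 / (qpoch (q * a) q (Suc n) * qpoch (q * a / z) q (Suc n))
                 * (q * a / z) ^ Suc n * \<alpha> (Suc n))
       = (\<Sum>n. qpoch z q (Suc n) / (qpoch (q * a) q (Suc n) * (1 - q ^ Suc n)) * (q * a / z) ^ Suc n)"
    (is "suminf ?beta - suminf ?alpha = suminf ?rhs")
proof -
  have \<alpha>0: "\<alpha> 0 = 1"
    using bp by (simp add: bailey_pair_def)
  have alpha_eq: "?alpha n = c (Suc n) * \<alpha> (Suc n)" for n
    by (simp add: bailey_coeff_def)
  define f where "f p = T (fst p) (snd p) * \<alpha> (fst p)" for p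
  have "(\<lambda>p. norm (f p)) summable_on UNIV"
    unfolding f_def using abs_alpha by (intro abs_summable_bailey_kernel \<alpha>0) (simp only: alpha_eq)
  moreover have "(\<lambda>n. f (j, n)) sums (if j = 0 then suminf ?rhs else c j * \<alpha> j)" for j
    using bailey_kernel_sums_0[OF abs_rhs] bailey_kernel_sums[of j] \<alpha>0
    by (cases "j = 0") (simp_all add: f_def sums_mult2)
  moreover have "(\<lambda>j. f (j, n)) sums (if n = 0 then 0 else ?beta (n - 1))" for n
    using bailey_kernel_column_sums[OF bp, of n] by (cases n) (simp_all add: f_def)
  ultimately have rows: "(\<lambda>j. if j = 0 then suminf ?rhs else c j * \<alpha> j) sums (\<Sum>\<^sub>\<infinity>p. f p)"
    and cols: "(\<lambda>n. if n = 0 then 0 else ?beta (n - 1)) sums (\<Sum>\<^sub>\<infinity>p. f p)"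
    by (rule sums_rows_and_columns)+
  have "(\<lambda>j. c (Suc j) * \<alpha> (Suc j)) sums ((\<Sum>\<^sub>\<infinity>p. f p) - suminf ?rhs)"
    using sums_split_initial_segment[OF rows, of 1] by simp
  then have "?alpha sums ((\<Sum>\<^sub>\<infinity>p. f p) - suminf ?rhs)"
    unfolding alpha_eq .
  moreover have "?beta sums (\<Sum>\<^sub>\<infinity>p. f p)"
    using sums_split_initial_segment[OF cols, of 1] by simp
  ultimately show ?thesis
    by (simp add: sums_unique[symmetric])
qed

end

section \<open>The unit Bailey pair\<close>

definition unit_alpha :: "complex \<Rightarrow> complex \<Rightarrow> nat \<Rightarrow> complex" where
  "unit_alpha a q j =
     (1 - a * q ^ (2 * j)) * qpoch a q j * (-1) ^ j * q ^ (j * (j - 1) div 2) / ((1 - a) * qpoch q q j)"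

lemma triangular_Suc: "Suc k * (Suc k + 1) div 2 = k * (k + 1) div 2 + Suc k"
proof -
  have "Suc k * (Suc k + 1) = k * (k + 1) + 2 * Suc k"
    by (simp add: algebra_simps)
  then show ?thesis
    by simp
qed

text \<open>The rational identity behind the induction step of \<open>unit_alpha_partial_sum\<close>, with
  \<open>V = q\<^sup>k\<^sup>+\<^sup>1\<close>, \<open>W = q\<^sup>n\<^sup>-\<^sup>k\<^sup>-\<^sup>1\<close> and the remaining variables standing for the common factors.\<close>

lemma unit_alpha_step_identity:
  fixes s t Ak Qk Qm Ank V W a q :: complex
  assumes "1 - V * W \<noteq> 0" "Qk \<noteq> 0" "Qm \<noteq> 0" "Ank \<noteq> 0" "1 - V \<noteq> 0"
    "1 - a * (V * W * V) \<noteq> 0" "1 - a \<noteq> 0" "1 - q * W \<noteq> 0"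
  shows "s * t * Ak * (1 - q * W) / ((1 - V * W) * Qk * (Qm * (1 - q * W)) * Ank)
      + (1 - a * (V * V)) * ((1 - a) * Ak) * (- s) * t / ((1 - a) * (Qk * (1 - V))) / (Qm * (Ank * (1 - a * (V * W * V))))
      = (- s) * (t * V) * (Ak * (1 - a * V)) * (1 - W) / ((1 - V * W) * (Qk * (1 - V)) * Qm * (Ank * (1 - a * (V * W * V))))"
proof -
  have combine: "s * t * Ak * F / (D1 * Qk * (Qm * F) * Ank) + N * (E * Ak) * (- s) * t / (E * (Qk * D2)) / (Qm * (Ank * D3))
    = s * t * Ak * (D2 * D3 - N * D1) / (D1 * (Qk * D2) * Qm * (Ank * D3))"
    if "F \<noteq> 0" "D1 \<noteq> 0" "D2 \<noteq> 0" "D3 \<noteq> 0" "E \<noteq> 0" for F D1 D2 D3 E N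
    using that assms by (simp add: field_simps)
  have "(1 - V) * (1 - a * (V * W * V)) - (1 - a * (V * V)) * (1 - V * W) = - (V * (1 - a * V) * (1 - W))"
    by (simp add: algebra_simps)
  with combine[of "1 - q * W" "1 - V * W" "1 - V" "1 - a * (V * W * V)" "1 - a" "1 - a * (V * V)"] assms
  show ?thesis
    by (simp add: mult_ac)
qed

lemma unit_alpha_partial_sum:
  assumes q: "norm q < 1" and a: "a \<noteq> 1" and aq: "\<And>n. qpoch (a * q) q n \<noteq> 0"
    and n: "1 \<le> n" and "k \<le> n"
  shows "(\<Sum>j\<le>k. unit_alpha a q j / (qpoch q q (n - j) * qpoch (a * q) q (n + j)))
       = (-1) ^ k * q ^ (k * (k + 1) div 2) * qpoch (a * q) q k * (1 - q ^ (n - k))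
         / ((1 - q ^ n) * qpoch q q k * qpoch q q (n - k) * qpoch (a * q) q (n + k))"
  using \<open>k \<le> n\<close>
proof (induction k)
  case 0
  then show ?case
    using a one_minus_power_neq_0[OF q, of n] n by (simp add: unit_alpha_def)
next
  case (Suc k)
  define s where "s = ((-1) ^ k :: complex)"
  define t where "t = q ^ (k * (k + 1) div 2)"
  define Ak where "Ak = qpoch (a * q) q k"
  define Qk where "Qk = qpoch q q k"
  define m where "m = n - Suc k"
  define Qm where "Qm = qpoch q q m"
  define Ank where "Ank = qpoch (a * q) q (n + k)"
  define V where "V = q ^ Suc k"
  define W where "W = q ^ m"
  have nm: "n = Suc k + m"
    using Suc.prems by (simp add: m_def)
  have qn: "q ^ n = V * W"
    by (simp add: V_def W_def nm power_add)
  have q2: "q ^ (2 * Suc k) = V * V"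
    unfolding V_def mult_2 power_add ..
  have Ank_Suc: "qpoch (a * q) q (n + Suc k) = Ank * (1 - a * (V * W * V))"
    by (simp add: Ank_def V_def W_def nm qpoch_Suc power_add mult_ac)
  have "Ank * (1 - a * (V * W * V)) \<noteq> 0"
    unfolding Ank_Suc[symmetric] by (rule aq)
  then have nz: "1 - V * W \<noteq> 0" "Qk \<noteq> 0" "Qm \<noteq> 0" "Ank \<noteq> 0" "1 - V \<noteq> 0"
    "1 - a * (V * W * V) \<noteq> 0" "1 - a \<noteq> 0" "1 - q * W \<noteq> 0"
    using one_minus_power_neq_0[OF q, of n] one_minus_power_neq_0[OF q, of "Suc k"]
      one_minus_power_neq_0[OF q, of "Suc m"] qpoch_q_neq_0[OF q] a n
    by (auto simp: qn Qk_def Qm_def V_def W_def)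
  have "(\<Sum>j\<le>Suc k. unit_alpha a q j / (qpoch q q (n - j) * qpoch (a * q) q (n + j)))
      = (-1) ^ k * q ^ (k * (k + 1) div 2) * qpoch (a * q) q k * (1 - q ^ (n - k))
         / ((1 - q ^ n) * qpoch q q k * qpoch q q (n - k) * qpoch (a * q) q (n + k))
        + unit_alpha a q (Suc k) / (qpoch q q (n - Suc k) * qpoch (a * q) q (n + Suc k))"
    using Suc by simp
  also have "\<dots> = s * t * Ak * (1 - q * W) / ((1 - V * W) * Qk * (Qm * (1 - q * W)) * Ank)
      + (1 - a * (V * V)) * ((1 - a) * Ak) * (- s) * t / ((1 - a) * (Qk * (1 - V))) / (Qm * (Ank * (1 - a * (V * W * V))))"
  proof -
    have eqs: "n - k = Suc m" "q ^ Suc m = q * W" "qpoch q q (Suc m) = Qm * (1 - q * W)"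
      "(-1 :: complex) ^ Suc k = - s" "q ^ (Suc k * (Suc k - 1) div 2) = t"
      "qpoch q q (Suc k) = Qk * (1 - V)" "qpoch q q (n - Suc k) = Qm"
      using nm by (simp_all add: W_def Qm_def s_def t_def Qk_def V_def m_def qpoch_Suc mult.commute)
    have a_Suc: "qpoch a q (Suc k) = (1 - a) * Ak"
      by (simp only: Ak_def qpoch_Suc_left)
    show ?thesis
      unfolding unit_alpha_def eqs a_Suc q2 qn Ank_Suc s_def[symmetric] t_def[symmetric] Ak_def[symmetric]
        Qk_def[symmetric] Ank_def[symmetric] ..
  qed
  also have "\<dots> = (- s) * (t * V) * (Ak * (1 - a * V)) * (1 - W)
      / ((1 - V * W) * (Qk * (1 - V)) * Qm * (Ank * (1 - a * (V * W * V))))"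
    by (rule unit_alpha_step_identity) (fact nz)+
  also have "\<dots> = (-1) ^ Suc k * q ^ (Suc k * (Suc k + 1) div 2) * qpoch (a * q) q (Suc k) * (1 - q ^ (n - Suc k))
       / ((1 - q ^ n) * qpoch q q (Suc k) * qpoch q q (n - Suc k) * qpoch (a * q) q (n + Suc k))"
  proof -
    have eqs: "(-1 :: complex) ^ Suc k = - s" "qpoch (a * q) q (Suc k) = Ak * (1 - a * V)"
      "q ^ (n - Suc k) = W" "qpoch q q (Suc k) = Qk * (1 - V)" "qpoch q q (n - Suc k) = Qm"
      by (simp_all add: s_def V_def Ak_def W_def Qk_def Qm_def m_def qpoch_Suc mult_ac)
    have tV: "q ^ (Suc k * (Suc k + 1) div 2) = t * V"
      unfolding triangular_Suc t_def V_def power_add ..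
    show ?thesis
      unfolding eqs tV qn Ank_Suc ..
  qed
  finally show ?case .
qed

lemma bailey_pair_unit:
  assumes "norm q < 1" "a \<noteq> 1" "\<And>n. qpoch (a * q) q n \<noteq> 0"
  shows "bailey_pair a q (unit_alpha a q) (\<lambda>n. of_bool (n = 0))"
  using unit_alpha_partial_sum[OF assms, of _ n for n] assms(2)
  by (auto simp: bailey_pair_def unit_alpha_def)

lemma qpoch_sqrt_mult_qpoch_neg_sqrt:
  assumes "s * s = a"
  shows "qpoch (q * s) q N * qpoch (- q * s) q N * (1 - a)
       = qpoch s q N * qpoch (- s) q N * (1 - a * q ^ (2 * N))"
proof (induction N)
  case (Suc N)
  have sq: "q ^ (2 * M) = q ^ M * q ^ M" for M
    unfolding mult_2 power_add ..
  have step: "(1 - q * s * q ^ N) * (1 - (- q * s) * q ^ N) = 1 - a * q ^ (2 * Suc N)"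
    unfolding sq by (simp add: assms[symmetric] algebra_simps)
  have base: "(1 - s * q ^ N) * (1 - (- s) * q ^ N) = 1 - a * q ^ (2 * N)"
    unfolding sq by (simp add: assms[symmetric] algebra_simps)
  have "qpoch (q * s) q (Suc N) * qpoch (- q * s) q (Suc N) * (1 - a)
      = (qpoch (q * s) q N * qpoch (- q * s) q N * (1 - a)) * ((1 - q * s * q ^ N) * (1 - (- q * s) * q ^ N))"
    by (simp add: qpoch_Suc mult_ac)
  also have "\<dots> = qpoch s q N * qpoch (- s) q N * ((1 - s * q ^ N) * (1 - (- s) * q ^ N)) * (1 - a * q ^ (2 * Suc N))"
    unfolding Suc.IH step base ..
  also have "\<dots> = qpoch s q (Suc N) * qpoch (- s) q (Suc N) * (1 - a * q ^ (2 * Suc N))"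
    by (simp add: qpoch_Suc mult_ac)
  finally show ?case .
qed simp

context bailey_setting
begin

lemma alpha_term_unit_alpha:
  assumes nz_sqrt: "\<And>n. qpoch (csqrt a) q n \<noteq> 0" and nz_neg_sqrt: "\<And>n. qpoch (- csqrt a) q n \<noteq> 0"
  shows "qpoch z q (Suc n) * qpoch q q n / (qpoch (q * a) q (Suc n) * qpoch (q * a / z) q (Suc n))
           * (q * a / z) ^ Suc n * unit_alpha a q (Suc n)
       = qpoch (q * csqrt a) q (Suc n) * qpoch (- q * csqrt a) q (Suc n)
           * qpoch a q (Suc n) * qpoch z q (Suc n) * q ^ (Suc n * (Suc n + 1) div 2)
           / (qpoch (csqrt a) q (Suc n) * qpoch (- csqrt a) q (Suc n)
              * qpoch (q * a) q (Suc n) * qpoch (q * a / z) q (Suc n) * (1 - q ^ Suc n))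
           * (- a / z) ^ Suc n"
proof -
  define s where "s = csqrt a"
  define N where "N = Suc n"
  have s: "s * s = a"
    unfolding s_def by (metis power2_csqrt power2_eq_square)
  have a: "a \<noteq> 1"
    using nz_sqrt[of 1] by (auto simp: qpoch_def)
  have field: "Z * Qn / (AQ * X) * (qN * az) * (Y * Ap * sN * T / (E * (Qn * D)))
     = P1 * P2 * Ap * Z * (T * qN) / (S1 * S2 * AQ * X * D) * (sN * az)"
    if "Qn \<noteq> 0" "E \<noteq> 0" "S1 * S2 \<noteq> 0" "P1 * P2 * E = S1 * S2 * Y"
    for Z Qn AQ X qN az Y Ap sN T E P1 P2 S1 S2 D :: complex
  proof -
    have Y: "Y = P1 * P2 * E / (S1 * S2)"
      using that(3,4) by (simp add: field_simps)
    show ?thesis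
      unfolding Y using that(1-3) by (simp add: field_simps)
  qed
  have "(q * a / z) ^ N = q ^ N * (a / z) ^ N" "(- a / z) ^ N = (-1) ^ N * (a / z) ^ N"
    by (simp_all add: power_mult_distrib[symmetric])
  moreover have "q ^ (N * (N + 1) div 2) = q ^ (N * (N - 1) div 2) * q ^ N"
  proof -
    have "Suc n * (Suc n - 1) = n * (n + 1)"
      by simp
    then show ?thesis
      unfolding N_def triangular_Suc power_add by (simp only:)
  qed
  moreover have "qpoch q q N = qpoch q q n * (1 - q ^ N)"
    by (simp add: N_def qpoch_Suc)
  ultimately show ?thesis
    unfolding N_def[symmetric] unit_alpha_def s_def[symmetric]
    using qpoch_sqrt_mult_qpoch_neg_sqrt[OF s, of q N] qpoch_qq_neq_0[of n] a nz_sqrt nz_neg_sqrt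
    by (simp only:) (rule field; simp add: s_def)
qed

lemma rhs_eq_very_well_poised:
  assumes nz_sqrt: "\<And>n. qpoch (csqrt a) q n \<noteq> 0"
    and nz_neg_sqrt: "\<And>n. qpoch (- csqrt a) q n \<noteq> 0"
    and abs_vwp: "summable (\<lambda>n. norm (
                 qpoch (q * csqrt a) q (Suc n) * qpoch (- q * csqrt a) q (Suc n)
                   * qpoch a q (Suc n) * qpoch z q (Suc n) * q ^ (Suc n * (Suc n + 1) div 2)
                 / (qpoch (csqrt a) q (Suc n) * qpoch (- csqrt a) q (Suc n)
                   * qpoch (q * a) q (Suc n) * qpoch (q * a / z) q (Suc n) * (1 - q ^ Suc n))
                 * (- a / z) ^ Suc n))"
    and abs_rhs: "summable (\<lambda>n. norm (qpoch z q (Suc n) / (qpoch (q * a) q (Suc n) * (1 - q ^ Suc n))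
                 * (q * a / z) ^ Suc n))"
  shows "(\<Sum>n. qpoch z q (Suc n) / (qpoch (q * a) q (Suc n) * (1 - q ^ Suc n)) * (q * a / z) ^ Suc n)
     = - (\<Sum>n. qpoch (q * csqrt a) q (Suc n) * qpoch (- q * csqrt a) q (Suc n)
                   * qpoch a q (Suc n) * qpoch z q (Suc n) * q ^ (Suc n * (Suc n + 1) div 2)
                 / (qpoch (csqrt a) q (Suc n) * qpoch (- csqrt a) q (Suc n)
                   * qpoch (q * a) q (Suc n) * qpoch (q * a / z) q (Suc n) * (1 - q ^ Suc n))
                 * (- a / z) ^ Suc n)"
proof -
  note alpha_eq = alpha_term_unit_alpha[OF nz_sqrt nz_neg_sqrt]
  have "a \<noteq> 1"
    using nz_sqrt[of 1] by (auto simp: qpoch_def)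
  then have "bailey_pair a q (unit_alpha a q) (\<lambda>n. of_bool (n = 0))"
    using norm_q qpoch_qa_neq_0 by (intro bailey_pair_unit) (simp_all add: mult.commute)
  from bailey_transform[OF this _ abs_rhs] show ?thesis
    using abs_vwp unfolding alpha_eq by simp
qed

end

section \<open>The Lambert series form\<close>

text \<open>As a function of \<open>u = a/z\<close>, the \<open>(z;q)\<close>-series is written in terms of the polynomial
  \<open>(u - a)(u - a q)\<cdots>(u - a q\<^sup>n\<^sup>-\<^sup>1) = u\<^sup>n (a/u;q)\<^sub>n\<close>.\<close>

definition qpoch_hom :: "complex \<Rightarrow> complex \<Rightarrow> complex \<Rightarrow> nat \<Rightarrow> complex" where
  "qpoch_hom a q u n = (\<Prod>k<n. u - a * q ^ k)"

definition poch_term :: "complex \<Rightarrow> complex \<Rightarrow> complex \<Rightarrow> nat \<Rightarrow> complex" where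
  "poch_term a q u n = q ^ Suc n * qpoch_hom a q u (Suc n) / (qpoch (q * a) q (Suc n) * (1 - q ^ Suc n))"

definition lambert_term :: "complex \<Rightarrow> complex \<Rightarrow> nat \<Rightarrow> complex" where
  "lambert_term q u n = u * q ^ Suc n / (1 - u * q ^ Suc n)"

lemma qpoch_hom_Suc: "qpoch_hom a q u (Suc n) = qpoch_hom a q u n * (u - a * q ^ n)"
  by (simp add: qpoch_hom_def)

lemma qpoch_hom_mult_q: "qpoch_hom a q (u * q) (Suc n) = (u * q - a) * q ^ n * qpoch_hom a q u n"
proof (induction n)
  case (Suc n)
  have "qpoch_hom a q (u * q) (Suc (Suc n)) = (u * q - a) * q ^ n * qpoch_hom a q u n * (u * q - a * q ^ Suc n)"
    by (simp only: qpoch_hom_Suc[of _ _ _ "Suc n"] Suc.IH)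
  also have "\<dots> = (u * q - a) * q ^ Suc n * qpoch_hom a q u (Suc n)"
    by (simp add: qpoch_hom_Suc algebra_simps)
  finally show ?case .
qed (simp add: qpoch_hom_def)

lemma qpoch_hom_eq_0: "m < n \<Longrightarrow> qpoch_hom a q (a * q ^ m) n = 0"
  unfolding qpoch_hom_def by (rule prod_zero) auto

lemma qpoch_hom_divide: "z \<noteq> 0 \<Longrightarrow> qpoch_hom a q (a / z) n = (a / z) ^ n * qpoch z q n"
  by (induction n) (simp_all add: qpoch_hom_def qpoch_hom_Suc qpoch_Suc field_simps)

lemma norm_qpoch_hom_le:
  assumes q: "norm q < 1" and \<rho>: "0 < \<rho>" "norm u \<le> \<rho>"
  shows "norm (qpoch_hom a q u n) \<le> \<rho> ^ n * exp (norm a / \<rho> / (1 - norm q))"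
proof -
  have "norm (qpoch_hom a q u n) = (\<Prod>k<n. norm (u - a * q ^ k))"
    by (simp add: qpoch_hom_def prod_norm)
  also have "\<dots> \<le> (\<Prod>k<n. \<rho> * (1 + (norm a / \<rho>) * norm q ^ k))"
  proof (intro prod_mono conjI)
    fix k
    have "norm (u - a * q ^ k) \<le> norm u + norm a * norm q ^ k"
      by (metis norm_mult norm_power norm_triangle_ineq4)
    also have "\<dots> \<le> \<rho> * (1 + (norm a / \<rho>) * norm q ^ k)"
      using \<rho> by (simp add: field_simps)
    finally show "norm (u - a * q ^ k) \<le> \<rho> * (1 + (norm a / \<rho>) * norm q ^ k)" .
  qed auto
  also have "\<dots> = \<rho> ^ n * (\<Prod>k<n. 1 + (norm a / \<rho>) * norm q ^ k)"
    by (simp add: prod.distrib)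
  also have "\<dots> \<le> \<rho> ^ n * exp (norm a / \<rho> / (1 - norm q))"
    using q \<rho> by (intro mult_left_mono prod_one_plus_geometric_le_exp) auto
  finally show ?thesis .
qed

context
  fixes a q :: complex
  assumes q: "norm q < 1" and qa: "\<And>n. qpoch (q * a) q n \<noteq> 0"
begin

lemma poch_term_diff:
  "poch_term a q u n - poch_term a q (u * q) n = q ^ Suc n * u * qpoch_hom a q u n / qpoch (q * a) q (Suc n)"
proof -
  have nz: "qpoch (q * a) q (Suc n) \<noteq> 0" "1 - q ^ Suc n \<noteq> 0"
    using qa one_minus_power_neq_0[OF q, of "Suc n"] by auto
  have "qpoch_hom a q u (Suc n) - qpoch_hom a q (u * q) (Suc n) = qpoch_hom a q u n * (u * (1 - q ^ Suc n))"
    unfolding qpoch_hom_mult_q unfolding qpoch_hom_Suc by (simp add: algebra_simps)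
  then have "poch_term a q u n - poch_term a q (u * q) n
      = q ^ Suc n * (qpoch_hom a q u n * (u * (1 - q ^ Suc n))) / (qpoch (q * a) q (Suc n) * (1 - q ^ Suc n))"
    unfolding poch_term_def by (simp add: diff_divide_distrib[symmetric] right_diff_distrib[symmetric])
  also have "\<dots> = q ^ Suc n * u * qpoch_hom a q u n / qpoch (q * a) q (Suc n)"
    using nz by (simp add: field_simps)
  finally show ?thesis .
qed

lemma sum_poch_term_diff:
  "(1 - q * u) * (\<Sum>n<N. q ^ Suc n * u * qpoch_hom a q u n / qpoch (q * a) q (Suc n))
     = q * u * (1 - q ^ N * qpoch_hom a q u N / qpoch (q * a) q N)"
proof (induction N)
  case (Suc N)
  have "1 - q * a * q ^ N \<noteq> 0"
    using qa[of "Suc N"] by (simp add: qpoch_Suc)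
  then have step: "(1 - q * u) * (q ^ Suc N * u * qpoch_hom a q u N / qpoch (q * a) q (Suc N))
      = q * u * (q ^ N * qpoch_hom a q u N / qpoch (q * a) q N
                 - q ^ Suc N * qpoch_hom a q u (Suc N) / qpoch (q * a) q (Suc N))"
    using qa[of N] by (simp add: qpoch_hom_Suc qpoch_Suc field_simps)
  show ?case
    unfolding sum.lessThan_Suc distrib_left Suc.IH step by (simp add: algebra_simps)
qed (simp add: qpoch_hom_def)

lemma suminf_poch_term_step:
  assumes "1 - a * q ^ Suc m \<noteq> 0"
  shows "(\<Sum>n. poch_term a q (a * q ^ m) n) - (\<Sum>n. poch_term a q (a * q ^ Suc m) n)
       = a * q ^ Suc m / (1 - a * q ^ Suc m)"
proof -
  define u where "u = a * q ^ m"
  have uq: "a * q ^ Suc m = u * q"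
    by (simp add: u_def mult_ac)
  have terminates: "poch_term a q (a * q ^ k) n = 0" if "k \<le> n" for k n
    using that by (simp add: poch_term_def qpoch_hom_eq_0)
  have "(\<Sum>n. poch_term a q u n) = (\<Sum>n<Suc m. poch_term a q u n)"
    by (rule suminf_finite) (auto simp: u_def terminates)
  moreover have "(\<Sum>n. poch_term a q (u * q) n) = (\<Sum>n<Suc m. poch_term a q (u * q) n)"
    by (rule suminf_finite) (use terminates[of "Suc m"] in \<open>auto simp: uq[symmetric]\<close>)
  ultimately have "(\<Sum>n. poch_term a q (a * q ^ m) n) - (\<Sum>n. poch_term a q (a * q ^ Suc m) n)
      = (\<Sum>n<Suc m. poch_term a q u n - poch_term a q (u * q) n)"
    by (simp only: uq u_def sum_subtractf)
  also have "\<dots> = (\<Sum>n<Suc m. q ^ Suc n * u * qpoch_hom a q u n / qpoch (q * a) q (Suc n))"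
    by (simp only: poch_term_diff)
  also have "\<dots> = q * u / (1 - q * u)"
  proof -
    have "qpoch_hom a q u (Suc m) = 0"
      by (simp add: u_def qpoch_hom_eq_0)
    then have "(1 - q * u) * (\<Sum>n<Suc m. q ^ Suc n * u * qpoch_hom a q u n / qpoch (q * a) q (Suc n)) = q * u"
      using sum_poch_term_diff[of u "Suc m"] by simp
    moreover have "1 - q * u \<noteq> 0"
      using assms unfolding uq by (simp add: mult.commute)
    ultimately show ?thesis
      by (simp add: eq_divide_eq mult.commute)
  qed
  also have "\<dots> = a * q ^ Suc m / (1 - a * q ^ Suc m)"
    unfolding uq by (simp only: mult.commute)
  finally show ?thesis .
qed

end

lemma summable_lambert_term:
  assumes q: "norm q < 1" and nz: "\<And>n. 1 - u * q ^ Suc n \<noteq> 0"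
  shows "summable (lambert_term q u)"
proof (rule summable_comparison_test_ev)
  have "(\<lambda>n. norm u * norm q ^ Suc n) \<longlonglongrightarrow> norm u * 0"
    by (intro tendsto_mult tendsto_const LIMSEQ_power_zero LIMSEQ_Suc) (use q in auto)
  then have "eventually (\<lambda>n. norm u * norm q ^ Suc n < 1/2) sequentially"
    by (intro order_tendstoD) auto
  then show "eventually (\<lambda>n. norm (lambert_term q u n) \<le> 2 * norm u * norm q ^ Suc n) sequentially"
  proof eventually_elim
    case (elim n)
    have "1 - norm (u * q ^ Suc n) \<le> norm (1 - u * q ^ Suc n)"
      using norm_triangle_ineq2[of 1 "u * q ^ Suc n"] by simp
    then have "1/2 \<le> norm (1 - u * q ^ Suc n)"
      using elim by (simp add: norm_mult norm_power)
    then have "norm (lambert_term q u n) \<le> norm (u * q ^ Suc n) / (1/2)"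
      unfolding lambert_term_def norm_divide by (intro divide_left_mono) auto
    then show ?case
      by (simp add: norm_mult norm_power)
  qed
  show "summable (\<lambda>n. 2 * norm u * norm q ^ Suc n)"
    by (intro summable_mult summable_Suc_iff[THEN iffD2] summable_geometric) (use q in auto)
qed

lemma suminf_lambert_term_step:
  assumes "norm q < 1" "\<And>n. 1 - u * q ^ Suc n \<noteq> 0"
  shows "(\<Sum>n. lambert_term q u n) - (\<Sum>n. lambert_term q (u * q) n) = u * q / (1 - u * q)"
proof -
  have "lambert_term q u (Suc n) = lambert_term q (u * q) n" for n
  proof -
    have "u * q ^ Suc (Suc n) = u * q * q ^ Suc n"
      by (simp only: power_Suc mult.assoc)
    then show ?thesis
      unfolding lambert_term_def by (simp only:)
  qed
  moreover have "lambert_term q u 0 = u * q / (1 - u * q)"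
    by (simp add: lambert_term_def)
  ultimately show ?thesis
    using suminf_split_head[OF summable_lambert_term[OF assms]] by simp
qed

lemma terminating_lambert_identity:
  assumes q: "norm q < 1" and qa: "\<And>n. qpoch (q * a) q n \<noteq> 0"
  shows "(\<Sum>n. poch_term a q (a * q ^ m) n) - (\<Sum>n. lambert_term q (a * q ^ m) n)
       + (\<Sum>n. lambert_term q a n) = 0"
proof (induction m)
  case 0
  have "poch_term a q a n = 0" for n
    using qpoch_hom_eq_0[of 0 "Suc n" a q] by (simp add: poch_term_def)
  then show ?case
    by simp
next
  case (Suc m)
  have nz: "1 - a * q ^ k \<noteq> 0" if "k \<ge> 1" for k
    using qa[of k] that by (cases k) (auto simp: qpoch_def mult_ac)
  have "(\<Sum>n. lambert_term q (a * q ^ m) n) - (\<Sum>n. lambert_term q (a * q ^ Suc m) n)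
      = a * q ^ Suc m / (1 - a * q ^ Suc m)"
    using suminf_lambert_term_step[OF q, of "a * q ^ m"] nz[of "m + Suc n" for n]
    by (simp add: power_add mult_ac)
  then show ?case
    using suminf_poch_term_step[OF q qa nz[of "Suc m"]] Suc.IH by (simp add: algebra_simps)
qed

lemma poch_term_series_holomorphic:
  assumes q: "norm q < 1" and qa: "\<And>n. qpoch (q * a) q n \<noteq> 0"
  shows "(\<lambda>u. \<Sum>n. poch_term a q u n) holomorphic_on ball 0 (1 / norm q)"
proof (rule holomorphic_on_suminf_ball[where f = "\<lambda>n u. poch_term a q u n"])
  show "(\<lambda>u. poch_term a q u n) holomorphic_on ball 0 (1 / norm q)" for n
    unfolding poch_term_def qpoch_hom_def
    using qa one_minus_power_neq_0[OF q, of "Suc n"] by (intro holomorphic_intros) auto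
  fix \<rho> :: real
  assume \<rho>: "0 < \<rho>" "\<rho> < 1 / norm q"
  then have q\<rho>: "norm q * \<rho> < 1"
    by (cases "q = 0") (auto simp: field_simps)
  obtain \<delta> where \<delta>: "\<delta> > 0" "\<And>n. \<delta> \<le> norm (qpoch (q * a) q n)"
    using qpoch_bounded_below[OF q qa] by blast
  define E where "E = exp (norm a / \<rho> / (1 - norm q))"
  define K where "K = E / (\<delta> * (1 - norm q))"
  have "norm (poch_term a q u n) \<le> K * (norm q * \<rho>) ^ Suc n" if u: "norm u \<le> \<rho>" for n u
  proof -
    have "norm (poch_term a q u n) = norm q ^ Suc n * norm (qpoch_hom a q u (Suc n))
        / (norm (qpoch (q * a) q (Suc n)) * norm (1 - q ^ Suc n))"
      by (simp add: poch_term_def norm_mult norm_divide norm_power)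
    also have "\<dots> \<le> norm q ^ Suc n * (\<rho> ^ Suc n * E) / (\<delta> * (1 - norm q))"
      using norm_qpoch_hom_le[OF q \<rho>(1) u, of a "Suc n"] \<delta> q \<rho>(1)
      by (intro frac_le mult_left_mono mult_mono norm_one_minus_power_ge)
         (auto simp: E_def mult.commute)
    also have "\<dots> = K * (norm q * \<rho>) ^ Suc n"
      by (simp add: K_def power_mult_distrib field_simps)
    finally show ?thesis .
  qed
  moreover have "summable (\<lambda>n. K * (norm q * \<rho>) ^ Suc n)"
    using q\<rho> \<rho>(1) by (intro summable_mult summable_Suc_iff[THEN iffD2] summable_geometric) auto
  ultimately show "\<exists>M. summable M \<and> (\<forall>n u. norm u \<le> \<rho> \<longrightarrow> norm (poch_term a q u n) \<le> M n)"
    by blast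
qed

lemma lambert_series_holomorphic:
  assumes q: "norm q < 1"
  shows "(\<lambda>u. \<Sum>n. lambert_term q u n) holomorphic_on ball 0 (1 / norm q)"
proof -
  have small: "norm (u * q ^ Suc n) \<le> norm q * \<rho>" if "norm u \<le> \<rho>" for u \<rho> n
  proof -
    have "norm q ^ Suc n \<le> norm q"
      using q by (simp add: power_le_one mult_left_le)
    then show ?thesis
      using that by (simp add: norm_mult norm_power mult_mono' mult.commute)
  qed
  have less_1: "norm q * \<rho> < 1" if "\<rho> < 1 / norm q" for \<rho>
    using that by (cases "q = 0") (auto simp: field_simps)
  show ?thesis
  proof (rule holomorphic_on_suminf_ball[where f = "\<lambda>n u. lambert_term q u n"])
    show "(\<lambda>u. lambert_term q u n) holomorphic_on ball 0 (1 / norm q)" for n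
    proof -
      have "norm (u * q ^ Suc n) < 1" if "u \<in> ball 0 (1 / norm q)" for u
        using small[OF order_refl, of u n] less_1[of "norm u"] that by simp
      then have "1 - u * q ^ Suc n \<noteq> 0" if "u \<in> ball 0 (1 / norm q)" for u
        using that by fastforce
      then show ?thesis
        unfolding lambert_term_def by (intro holomorphic_intros) auto
    qed
    fix \<rho> :: real
    assume \<rho>: "0 < \<rho>" "\<rho> < 1 / norm q"
    define K where "K = \<rho> / (1 - norm q * \<rho>)"
    have "norm (lambert_term q u n) \<le> K * norm q ^ Suc n" if u: "norm u \<le> \<rho>" for n u
    proof -
      have "norm (lambert_term q u n) = norm (u * q ^ Suc n) / norm (1 - u * q ^ Suc n)"
        by (simp add: lambert_term_def norm_divide)
      also have "\<dots> \<le> (\<rho> * norm q ^ Suc n) / (1 - norm q * \<rho>)"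
        using small[OF u, of n] less_1[OF \<rho>(2)] u norm_triangle_ineq2[of 1 "u * q ^ Suc n"] \<rho>(1)
        by (intro frac_le) (auto simp: norm_mult norm_power mult_right_mono)
      also have "\<dots> = K * norm q ^ Suc n"
        by (simp add: K_def)
      finally show ?thesis .
    qed
    moreover have "summable (\<lambda>n. K * norm q ^ Suc n)"
      using q by (intro summable_mult summable_Suc_iff[THEN iffD2] summable_geometric) auto
    ultimately show "\<exists>M. summable M \<and> (\<forall>n u. norm u \<le> \<rho> \<longrightarrow> norm (lambert_term q u n) \<le> M n)"
      by blast
  qed
qed

lemma islimpt_ball_inter_geometric:
  fixes a q :: complex
  assumes "a \<noteq> 0" "q \<noteq> 0" "norm q < 1" "R > 0"
  shows "0 islimpt (ball 0 R \<inter> range (\<lambda>m. a * q ^ m))"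
proof (rule islimpt_approachable[THEN iffD2], intro allI impI)
  fix e :: real
  assume "e > 0"
  have "(\<lambda>m. norm a * norm q ^ m) \<longlonglongrightarrow> norm a * 0"
    by (intro tendsto_mult tendsto_const LIMSEQ_power_zero) (use assms in auto)
  then have "eventually (\<lambda>m. norm a * norm q ^ m < min e R) sequentially"
    using \<open>e > 0\<close> assms by (intro order_tendstoD) auto
  then obtain m where "norm a * norm q ^ m < min e R"
    by (auto simp: eventually_sequentially)
  then show "\<exists>u\<in>ball 0 R \<inter> range (\<lambda>m. a * q ^ m). u \<noteq> 0 \<and> dist u 0 < e"
    using assms by (intro bexI[of _ "a * q ^ m"]) (auto simp: norm_mult norm_power)
qed

lemma (in bailey_setting) rhs_eq_lambert_difference:
  "(\<Sum>n. qpoch z q (Suc n) / (qpoch (q * a) q (Suc n) * (1 - q ^ Suc n)) * (q * a / z) ^ Suc n)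
   = (\<Sum>n. (a * q ^ Suc n / z) / (1 - a * q ^ Suc n / z)) - (\<Sum>n. (a * q ^ Suc n) / (1 - a * q ^ Suc n))"
proof (cases "a = 0 \<or> q = 0")
  case False
  define S where "S = ball (0 :: complex) (1 / norm q)"
  define D where "D u = (\<Sum>n. poch_term a q u n) - (\<Sum>n. lambert_term q u n) + (\<Sum>n. lambert_term q a n)" for u
  define U where "U = S \<inter> range (\<lambda>m. a * q ^ m)"
  have hol: "D holomorphic_on S"
    unfolding D_def S_def
    by (intro holomorphic_intros poch_term_series_holomorphic lambert_series_holomorphic norm_q qpoch_qa_neq_0)
  have az: "a / z \<in> S"
  proof -
    have "norm a / norm z < 1 / norm q"
      using norm_qa_less z_neq_0 False by (simp add: norm_mult field_simps)
    then show ?thesis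
      by (simp add: S_def norm_divide)
  qed
  have limpt: "0 islimpt U"
    unfolding U_def S_def using False norm_q by (intro islimpt_ball_inter_geometric) auto
  have zero: "D u = 0" if "u \<in> U" for u
    using that terminating_lambert_identity[OF norm_q qpoch_qa_neq_0] by (auto simp: U_def D_def)
  have D0: "D (a / z) = 0"
    by (rule analytic_continuation[OF hol _ _ _ _ limpt zero az]) (use False in \<open>auto simp: S_def U_def\<close>)
  have poch: "poch_term a q (a / z) n
      = qpoch z q (Suc n) / (qpoch (q * a) q (Suc n) * (1 - q ^ Suc n)) * (q * a / z) ^ Suc n" for n
  proof -
    have "q ^ Suc n * qpoch_hom a q (a / z) (Suc n) = qpoch z q (Suc n) * (q * a / z) ^ Suc n"
      unfolding qpoch_hom_divide[OF z_neq_0] by (simp add: power_mult_distrib[symmetric] mult_ac)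
    then show ?thesis
      unfolding poch_term_def by (simp add: mult_ac)
  qed
  have lambert: "lambert_term q (a / z) n = (a * q ^ Suc n / z) / (1 - a * q ^ Suc n / z)"
    "lambert_term q a n = (a * q ^ Suc n) / (1 - a * q ^ Suc n)" for n
    by (simp_all add: lambert_term_def)
  show ?thesis
    using D0 unfolding D_def poch lambert by (simp add: algebra_simps)
qed auto

theorem theorem3p1:
  fixes a q z :: complex and \<alpha> \<beta> :: "nat \<Rightarrow> complex"
  assumes hq: "norm q < 1"
    and hBP: "bailey_pair a q \<alpha> \<beta>"
    and hz: "norm (q * a) < norm z"
    and nz1: "\<And>n. qpoch (q * a) q n \<noteq> 0"
    and nz2: "\<And>n. qpoch (q * a / z) q n \<noteq> 0"
    and nz3: "\<And>n. qpoch (csqrt a) q n \<noteq> 0"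
    and nz4: "\<And>n. qpoch (- csqrt a) q n \<noteq> 0"
    and nz5: "\<And>n. n \<ge> 1 \<Longrightarrow> 1 - q ^ n \<noteq> 0"
    and nz6: "\<And>n. n \<ge> 1 \<Longrightarrow> 1 - a * q ^ n / z \<noteq> 0"
    and nz7: "\<And>n. n \<ge> 1 \<Longrightarrow> 1 - a * q ^ n \<noteq> 0"
    and ac1: "summable (\<lambda>n. norm (qpoch z q (Suc n) * qpoch q q n * (q * a / z) ^ Suc n * \<beta> (Suc n)))"
    and ac2: "summable (\<lambda>n. norm (qpoch z q (Suc n) * qpoch q q n
                 / (qpoch (q * a) q (Suc n) * qpoch (q * a / z) q (Suc n))
                 * (q * a / z) ^ Suc n * \<alpha> (Suc n)))"
    and ac3: "summable (\<lambda>n. norm (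
                 qpoch (q * csqrt a) q (Suc n) * qpoch (- q * csqrt a) q (Suc n)
                   * qpoch a q (Suc n) * qpoch z q (Suc n) * q ^ (Suc n * (Suc n + 1) div 2)
                 / (qpoch (csqrt a) q (Suc n) * qpoch (- csqrt a) q (Suc n)
                   * qpoch (q * a) q (Suc n) * qpoch (q * a / z) q (Suc n) * (1 - q ^ Suc n))
                 * (- a / z) ^ Suc n))"
    and ac4: "summable (\<lambda>n. norm (qpoch z q (Suc n) / (qpoch (q * a) q (Suc n) * (1 - q ^ Suc n))
                 * (q * a / z) ^ Suc n))"
    and ac5: "summable (\<lambda>n. norm ((a * q ^ Suc n / z) / (1 - a * q ^ Suc n / z)))"
    and ac6: "summable (\<lambda>n. norm ((a * q ^ Suc n) / (1 - a * q ^ Suc n)))"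
  shows
   "(let LHS = (\<Sum>n. qpoch z q (Suc n) * qpoch q q n * (q * a / z) ^ Suc n * \<beta> (Suc n))
             - (\<Sum>n. qpoch z q (Suc n) * qpoch q q n
                 / (qpoch (q * a) q (Suc n) * qpoch (q * a / z) q (Suc n))
                 * (q * a / z) ^ Suc n * \<alpha> (Suc n))
    in LHS = - (\<Sum>n. qpoch (q * csqrt a) q (Suc n) * qpoch (- q * csqrt a) q (Suc n)
                   * qpoch a q (Suc n) * qpoch z q (Suc n) * q ^ (Suc n * (Suc n + 1) div 2)
                 / (qpoch (csqrt a) q (Suc n) * qpoch (- csqrt a) q (Suc n)
                   * qpoch (q * a) q (Suc n) * qpoch (q * a / z) q (Suc n) * (1 - q ^ Suc n))
                 * (- a / z) ^ Suc n)
     \<and> LHS = (\<Sum>n. qpoch z q (Suc n) / (qpoch (q * a) q (Suc n) * (1 - q ^ Suc n))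
                 * (q * a / z) ^ Suc n)
     \<and> LHS = (\<Sum>n. (a * q ^ Suc n / z) / (1 - a * q ^ Suc n / z))
             - (\<Sum>n. (a * q ^ Suc n) / (1 - a * q ^ Suc n)))"
proof -
  interpret bailey_setting a q z
    using hq hz nz1 nz2 by unfold_locales
  note transform = bailey_transform[OF hBP ac2 ac4]
  show ?thesis
    unfolding Let_def transform
    using rhs_eq_very_well_poised[OF nz3 nz4 ac3 ac4] rhs_eq_lambert_difference by simp
qed

end
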